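(* Let $C>0$ and $\epsilon\in(0,1)$, and let $\phi_C^\epsilon(z):=z+C(1+z)^\epsilon$, where $(\cdot)^\epsilon$ denotes the principal branch of the power function. Then: (1) The map $\phi_C^\epsilon$ is biholomorphic from $H(0)=\{z\in\mathbb{C}:\operatorname{Re}z>0\}$ onto its image. (2) $\operatorname{Re}\phi_C^\epsilon(ir)\sim C\cos\left(\epsilon\frac{\pi}{2}\right)r^\epsilon$ and $\operatorname{Im}\phi_C^\epsilon(ir)\sim r$ as $r\to+\infty$ in $\mathbb{R}$. (3) There exists a continuous function $f_C^\epsilon:[C,+\infty)\to[0,+\infty)$ such that $\operatorname{Im}\phi_C^\epsilon(ir)=f_C^\epsilon(\operatorname{Re}\phi_C^\epsilon(ir))$ for all $r>0$ and $f_C^\epsilon(r)\sim K_C^\epsilon r^{1/\epsilon}$ as $r\to+\infty$, where $K_C^\epsilon:=\left(C\cos\left(\epsilon\frac{\pi}{2}\right)\right)^{-1/\epsilon}$.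
   Context: For real functions (or germs) $f,g$, $f\sim g$ means that $g(x)\neq 0$ for all sufficiently large $x$ and $f(x)/g(x)\to 1$ as $x\to+\infty$. The formula for $\phi_C^\epsilon$ also makes sense on the closed right half-plane (in particular at the points $ir$, $r>0$), and in (2),(3) $\phi_C^\epsilon$ is evaluated there. *)

theory Defs
  imports "HOL-Complex_Analysis.Complex_Analysis" "HOL-Library.Landau_Symbols"
begin

text \<open>phi_C^eps(z) = z + C (1+z)^eps, principal branch (complex powr = exp (eps * Ln (1+z))).\<close>
definition phiCe :: "real \<Rightarrow> real \<Rightarrow> complex \<Rightarrow> complex" where
  "phiCe C eps z = z + complex_of_real C * (1 + z) powr (complex_of_real eps)"

definition rhp :: "complex set" where
  "rhp = {z. Re z > 0}"

end

(*
  The derivative 1 + C eps (1 + z) powr (eps - 1) of phi has positive real part on Re z > -1,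
  since there |arg (1 + z)| < pi/2 and |eps - 1| < 1.  A holomorphic map on a convex domain whose
  derivative has positive real part is injective (Noshiro-Warschawski: Re (conj (z - w) * f) strictly
  increases along the segment from w to z), and an injective holomorphic map on an open set has a
  holomorphic inverse on its image.

  On the imaginary axis (1 + i r) powr eps = (1 + r^2) powr (eps/2) * cis (eps * arctan r), which
  gives closed forms for Re phi(ir) and Im phi(ir); their asymptotics follow from arctan r -> pi/2.
  Re phi(ir) increases strictly from C to infinity on [0, oo), so f is Im phi(i .) composed with the
  continuous inverse u of Re phi(i .).  Since Im phi(ir) ~ r, f ~ u, and inverting
  Re phi(ir) ~ C cos (eps pi/2) r powr eps gives u(s) ~ (s / (C cos (eps pi/2))) powr (1/eps).
*)

theory Submission
  imports Defs "HOL-Real_Asymp.Real_Asymp"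
begin

lemma one_plus_power2_pos [simp]: "0 < 1 + (x::real)\<^sup>2"
  by (simp add: add_pos_nonneg)

lemma one_plus_power2_neq_zero [simp]: "1 + (x::real)\<^sup>2 \<noteq> 0"
  using one_plus_power2_pos[of x] by linarith

lemma cos_times_pi_half_pos:
  fixes x :: real
  assumes "\<bar>x\<bar> < 1"
  shows "cos (x * pi / 2) > 0"
proof -
  have "\<bar>x * pi / 2\<bar> < pi / 2"
    using assms by (simp add: abs_mult)
  then show ?thesis
    by (intro cos_gt_zero_pi) (auto simp: abs_less_iff)
qed

lemma sin_times_arctan_less:
  assumes "r > 0" and "0 \<le> eps" and "eps < 1"
  shows "sin (eps * arctan r) < r * cos (eps * arctan r)"
proof -
  define a where "a = arctan r"
  have "0 < a" "a < pi / 2"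
    using assms arctan_bounded[of r] by (auto simp: a_def arctan_less_zero_iff arctan_eq_zero_iff)
  then have "cos a > 0"
    by (intro cos_gt_zero_pi) auto
  have "0 < (1 - eps) * a" "(1 - eps) * a \<le> a"
    using assms \<open>0 < a\<close> by (auto intro: mult_left_le_one_le)
  then have "sin (a - eps * a) > 0"
    using \<open>a < pi / 2\<close> by (intro sin_gt_zero) (auto simp: algebra_simps)
  moreover have "sin a = r * cos a"
    using tan_arctan[of r] \<open>cos a > 0\<close> by (simp add: a_def tan_def field_simps)
  ultimately have "cos a * sin (eps * a) < cos a * (r * cos (eps * a))"
    by (simp add: sin_diff algebra_simps)
  then show ?thesis
    using \<open>cos a > 0\<close> by (simp add: a_def)
qed

lemma Re_powr_of_real_pos:
  assumes "Re w > 0" and "\<bar>p\<bar> \<le> 1"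
  shows "Re (w powr of_real p) > 0"
proof -
  have "\<bar>p * Im (Ln w)\<bar> \<le> \<bar>Im (Ln w)\<bar>"
    using assms(2) by (simp add: abs_mult mult_left_le_one_le)
  also have "\<dots> < pi / 2"
    using assms(1) by (rule Re_Ln_pos_lt_imp)
  finally have "cos (p * Im (Ln w)) > 0"
    by (intro cos_gt_zero_pi) auto
  moreover have "w \<noteq> 0"
    using assms(1) by auto
  ultimately show ?thesis
    by (simp add: powr_def Re_exp)
qed

lemma inj_on_if_Re_deriv_pos:
  fixes f f' :: "complex \<Rightarrow> complex"
  assumes S: "convex S"
    and f': "\<And>z. z \<in> S \<Longrightarrow> (f has_field_derivative f' z) (at z)"
    and Re_f': "\<And>z. z \<in> S \<Longrightarrow> Re (f' z) > 0"
  shows "inj_on f S"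
proof (rule inj_onI, rule ccontr)
  fix z w
  assume "z \<in> S" "w \<in> S" "f z = f w" "z \<noteq> w"
  define d where "d = z - w"
  define h where "h t = Re (cnj d * f (w + of_real t * d))" for t :: real
  have "h 0 < h 1"
  proof (rule DERIV_pos_imp_increasing[OF zero_less_one])
    fix t :: real
    assume "0 \<le> t" "t \<le> 1"
    let ?p = "w + of_real t * d"
    have "?p = (1 - t) *\<^sub>R w + t *\<^sub>R z"
      by (simp add: d_def scaleR_conv_of_real algebra_simps)
    with \<open>0 \<le> t\<close> \<open>t \<le> 1\<close> have "?p \<in> S"
      using convexD_alt[OF S \<open>w \<in> S\<close> \<open>z \<in> S\<close>] by simp
    have "((\<lambda>s. w + of_real s * d) has_derivative (\<lambda>s. of_real s * d)) (at t)"
      by (auto intro!: derivative_eq_intros)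
    from has_derivative_compose[OF this f'[OF \<open>?p \<in> S\<close>, unfolded has_field_derivative_def]]
    have "((\<lambda>s. f (w + of_real s * d)) has_derivative (\<lambda>s. f' ?p * (of_real s * d))) (at t)" .
    then have "(h has_derivative (\<lambda>s. Re (cnj d * (f' ?p * (of_real s * d))))) (at t)"
      unfolding h_def by (intro has_derivative_Re has_derivative_mult_right)
    moreover have "Re (cnj d * (f' ?p * (of_real s * d))) = (cmod d)\<^sup>2 * Re (f' ?p) * s" for s
    proof -
      have "cnj d * (f' ?p * (of_real s * d)) = of_real s * (d * cnj d) * f' ?p"
        by (simp add: mult_ac)
      also have "\<dots> = of_real (s * (cmod d)\<^sup>2) * f' ?p"
        by (simp only: complex_norm_square[symmetric] of_real_mult)
      finally show ?thesis
        by (simp only:) (simp add: mult_ac)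
    qed
    ultimately have "(h has_real_derivative (cmod d)\<^sup>2 * Re (f' ?p)) (at t)"
      unfolding has_field_derivative_def by (simp only:)
    moreover have "(cmod d)\<^sup>2 * Re (f' ?p) > 0"
      using Re_f'[OF \<open>?p \<in> S\<close>] \<open>z \<noteq> w\<close> by (simp add: d_def)
    ultimately show "\<exists>y. (h has_real_derivative y) (at t) \<and> y > 0"
      by blast
  qed
  then show False
    using \<open>f z = f w\<close> by (simp add: h_def d_def)
qed

lemma continuous_on_the_inv_into_atLeast:
  fixes g :: "real \<Rightarrow> real"
  assumes cont: "continuous_on {a..} g" and mono: "strict_mono_on {a..} g"
  shows "continuous_on (g ` {a..}) (the_inv_into {a..} g)"
  unfolding continuous_on_def
proof
  fix y
  assume "y \<in> g ` {a..}"
  then obtain x where "x \<ge> a" "y = g x"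
    by auto
  define b where "b = x + 1"
  have inj: "inj_on g {a..}"
    using mono by (rule strict_mono_on_imp_inj_on)
  \<comment> \<open>Near y the inverse agrees with that of g restricted to the compact interval [a, b].\<close>
  have "continuous_on (g ` {a..b}) (the_inv_into {a..b} g)"
    using cont inj by (intro continuous_on_inv_into) (auto elim: continuous_on_subset inj_on_subset)
  moreover have "the_inv_into {a..b} g z = the_inv_into {a..} g z" if "z \<in> g ` {a..b}" for z
    using that inj inj_on_subset[OF inj] by (auto simp: the_inv_into_f_f)
  ultimately have "continuous_on (g ` {a..b}) (the_inv_into {a..} g)"
    by (rule continuous_on_eq)
  moreover have "y \<in> g ` {a..b}"
    using \<open>x \<ge> a\<close> \<open>y = g x\<close> by (simp add: b_def)
  ultimately have "(the_inv_into {a..} g \<longlongrightarrow> the_inv_into {a..} g y) (at y within g ` {a..b})"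
    by (auto simp: continuous_on_def)
  moreover have "at y within g ` {a..} = at y within g ` {a..b}"
  proof (rule at_within_nhd[of _ "{..<g b}"])
    show "y \<in> {..<g b}"
      using \<open>x \<ge> a\<close> \<open>y = g x\<close> mono by (simp add: b_def strict_mono_on_less)
    show "g ` {a..} \<inter> {..<g b} - {y} = g ` {a..b} \<inter> {..<g b} - {y}"
      using \<open>x \<ge> a\<close> mono by (auto simp: b_def strict_mono_on_less)
  qed simp
  ultimately show "(the_inv_into {a..} g \<longlongrightarrow> the_inv_into {a..} g y) (at y within g ` {a..})"
    by simp
qed

lemma filterlim_the_inv_into_at_top:
  fixes g :: "real \<Rightarrow> real"
  assumes mono: "strict_mono_on {a..} g" and image: "g ` {a..} = {b..}"
  shows "filterlim (the_inv_into {a..} g) at_top at_top"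
  unfolding filterlim_at_top
proof
  fix Z
  have inj: "inj_on g {a..}"
    using mono by (rule strict_mono_on_imp_inj_on)
  define Z' where "Z' = max a Z"
  show "eventually (\<lambda>s. Z \<le> the_inv_into {a..} g s) at_top"
    using eventually_ge_at_top[of "g Z'"]
  proof eventually_elim
    case (elim s)
    have "g Z' \<ge> b"
      using image by (auto simp: Z'_def)
    then have "s \<in> g ` {a..}"
      using elim image by simp
    then have "the_inv_into {a..} g s \<ge> a" "g (the_inv_into {a..} g s) = s"
      using inj by (auto simp: the_inv_into_f_f)
    then show ?case
      using elim strict_mono_on_less_eq[OF mono, of Z' "the_inv_into {a..} g s"]
      by (simp add: Z'_def)
  qed
qed

lemma asymp_equiv_inverse_powr:
  fixes g u :: "real \<Rightarrow> real"
  assumes g: "g \<sim>[at_top] (\<lambda>r. K * r powr p)" and "K > 0" and "p > 0"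
    and u: "filterlim u at_top at_top" and gu: "eventually (\<lambda>s. g (u s) = s) at_top"
  shows "u \<sim>[at_top] (\<lambda>s. K powr (-1 / p) * s powr (1 / p))"
proof -
  have "(\<lambda>s. g (u s)) \<sim>[at_top] (\<lambda>s. K * u s powr p)"
    using g u by (rule asymp_equiv_compose')
  then have "(\<lambda>s. s) \<sim>[at_top] (\<lambda>s. K * u s powr p)"
    using gu by (rule asymp_equiv_transfer) simp
  then have "(\<lambda>s. s / K) \<sim>[at_top] (\<lambda>s. K * u s powr p / K)"
    by (rule asymp_equiv_divide) simp
  then have "(\<lambda>s. u s powr p) \<sim>[at_top] (\<lambda>s. s / K)"
    using \<open>K > 0\<close> by (simp add: asymp_equiv_sym)
  then have "(\<lambda>s. (u s powr p) powr (1 / p)) \<sim>[at_top] (\<lambda>s. (s / K) powr (1 / p))"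
    using \<open>K > 0\<close>
    by (intro asymp_equiv_powr_real) (auto intro!: eventually_mono[OF eventually_ge_at_top[of 0]])
  moreover have "eventually (\<lambda>s. (u s powr p) powr (1 / p) = u s) at_top"
    using filterlim_at_top[THEN iffD1, OF u, rule_format, of 0]
    by eventually_elim (use \<open>p > 0\<close> in \<open>simp add: powr_powr\<close>)
  moreover have "eventually (\<lambda>s. (s / K) powr (1 / p) = K powr (-1 / p) * s powr (1 / p)) at_top"
    using eventually_ge_at_top[of 0]
    by eventually_elim (use \<open>K > 0\<close> in \<open>simp add: powr_divide powr_minus_divide\<close>)
  ultimately show ?thesis
    by (rule asymp_equiv_transfer)
qed

lemma phiCe_has_field_derivative:
  assumes "Re z > -1"
  shows "(phiCe C eps has_field_derivative
           1 + of_real C * of_real eps * (1 + z) powr (of_real eps - 1)) (at z)"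
proof -
  have "1 + z \<notin> \<real>\<^sub>\<le>\<^sub>0"
    using assms by (auto simp: complex_nonpos_Reals_iff)
  then show ?thesis
    unfolding phiCe_def [abs_def] by (auto intro!: derivative_eq_intros)
qed

lemma inj_on_phiCe:
  assumes "C \<ge> 0" and "0 \<le> eps" and "eps \<le> 2"
  shows "inj_on (phiCe C eps) {z. Re z > -1}"
proof (rule inj_on_if_Re_deriv_pos)
  fix z
  assume "z \<in> {z. Re z > -1}"
  then show "(phiCe C eps has_field_derivative
               1 + of_real C * of_real eps * (1 + z) powr (of_real eps - 1)) (at z)"
    by (simp add: phiCe_has_field_derivative)
  have "Re ((1 + z) powr of_real (eps - 1)) > 0"
    using \<open>z \<in> {z. Re z > -1}\<close> assms by (intro Re_powr_of_real_pos) auto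
  then show "Re (1 + of_real C * of_real eps * (1 + z) powr (of_real eps - 1)) > 0"
    using assms by (simp add: add_pos_nonneg)
qed (rule convex_halfspace_Re_gt)

lemma phiCe_biholomorphic_rhp:
  assumes "C \<ge> 0" and "0 \<le> eps" and "eps \<le> 2"
  shows "phiCe C eps holomorphic_on rhp \<and> inj_on (phiCe C eps) rhp \<and>
    (\<exists>g. g holomorphic_on (phiCe C eps ` rhp) \<and>
         (\<forall>z\<in>rhp. g (phiCe C eps z) = z) \<and>
         (\<forall>w\<in>phiCe C eps ` rhp. phiCe C eps (g w) = w))"
proof -
  have "open rhp"
    by (simp add: rhp_def open_halfspace_Re_gt)
  have "rhp \<subseteq> {z. Re z > -1}"
    by (auto simp: rhp_def)
  then have hol: "phiCe C eps holomorphic_on rhp"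
    unfolding holomorphic_on_open[OF \<open>open rhp\<close>] by (blast intro: phiCe_has_field_derivative)
  have inj: "inj_on (phiCe C eps) rhp"
    using inj_on_phiCe[OF assms] \<open>rhp \<subseteq> _\<close> by (rule inj_on_subset)
  obtain g where "g holomorphic_on (phiCe C eps ` rhp)" "\<And>z. z \<in> rhp \<Longrightarrow> g (phiCe C eps z) = z"
    using holomorphic_has_inverse[OF hol \<open>open rhp\<close> inj] by metis
  then show ?thesis
    using hol inj by fastforce
qed

lemma Ln_1_plus_ii_times:
  "Ln (1 + \<i> * of_real r) = of_real (ln (1 + r\<^sup>2) / 2) + \<i> * of_real (arctan r)"
proof (rule Ln_unique)
  have "exp (of_real (ln (1 + r\<^sup>2) / 2)) = (of_real (sqrt (1 + r\<^sup>2)) :: complex)"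
    by (simp add: exp_of_real ln_sqrt[symmetric])
  then show "exp (of_real (ln (1 + r\<^sup>2) / 2) + \<i> * of_real (arctan r)) = 1 + \<i> * of_real r"
    unfolding exp_add cis_conv_exp[symmetric]
    by (simp add: complex_eq_iff cos_arctan sin_arctan del: of_real_divide)
qed (use arctan_bounded[of r] in auto)

lemma powr_1_plus_ii_times:
  "(1 + \<i> * of_real r) powr of_real p = of_real ((1 + r\<^sup>2) powr (p / 2)) * cis (p * arctan r)"
proof -
  have "1 + \<i> * of_real r \<noteq> 0"
    by (simp add: complex_eq_iff)
  then have "(1 + \<i> * of_real r) powr of_real p
      = exp (of_real (p * (ln (1 + r\<^sup>2) / 2))) * exp (\<i> * of_real (p * arctan r))"
    by (simp add: powr_def Ln_1_plus_ii_times algebra_simps exp_add)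
  then show ?thesis
    unfolding exp_of_real cis_conv_exp
    by (simp add: powr_def mult_ac del: of_real_mult of_real_divide)
qed

definition phi_axis_Re :: "real \<Rightarrow> real \<Rightarrow> real \<Rightarrow> real" where
  "phi_axis_Re C eps r = C * (1 + r\<^sup>2) powr (eps / 2) * cos (eps * arctan r)"

definition phi_axis_Im :: "real \<Rightarrow> real \<Rightarrow> real \<Rightarrow> real" where
  "phi_axis_Im C eps r = r + C * (1 + r\<^sup>2) powr (eps / 2) * sin (eps * arctan r)"

lemma Re_phiCe_ii_times: "Re (phiCe C eps (\<i> * of_real r)) = phi_axis_Re C eps r"
  by (simp add: phiCe_def powr_1_plus_ii_times phi_axis_Re_def add.commute)

lemma Im_phiCe_ii_times: "Im (phiCe C eps (\<i> * of_real r)) = phi_axis_Im C eps r"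
  by (simp add: phiCe_def powr_1_plus_ii_times phi_axis_Im_def add.commute)

lemma continuous_on_phi_axis_Re: "continuous_on S (phi_axis_Re C eps)"
  unfolding phi_axis_Re_def by (intro continuous_intros) auto

lemma continuous_on_phi_axis_Im: "continuous_on S (phi_axis_Im C eps)"
  unfolding phi_axis_Im_def by (intro continuous_intros) auto

lemma phi_axis_Re_has_real_derivative:
  "(phi_axis_Re C eps has_real_derivative
     C * eps * (1 + r\<^sup>2) powr (eps / 2 - 1) * (r * cos (eps * arctan r) - sin (eps * arctan r))) (at r)"
proof -
  have pos: "1 + r\<^sup>2 > 0"
    by simp
  then have "(1 + r\<^sup>2) powr (eps / 2) = (1 + r\<^sup>2) powr (eps / 2 - 1) * (1 + r\<^sup>2)"
    by (simp add: powr_diff)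
  with pos show ?thesis
    unfolding phi_axis_Re_def [abs_def]
    by (auto intro!: derivative_eq_intros simp: field_simps power2_eq_square)
qed

lemma phi_axis_Re_strict_mono_on:
  assumes "C > 0" and "0 < eps" and "eps < 1"
  shows "strict_mono_on {0..} (phi_axis_Re C eps)"
proof (rule strict_mono_onI)
  fix x y :: real
  assume "x \<in> {0..}" "y \<in> {0..}" "x < y"
  show "phi_axis_Re C eps x < phi_axis_Re C eps y"
  proof (rule DERIV_pos_imp_increasing_open[OF \<open>x < y\<close>])
    fix r
    assume "x < r" "r < y"
    then have "sin (eps * arctan r) < r * cos (eps * arctan r)"
      using \<open>x \<in> {0..}\<close> assms by (intro sin_times_arctan_less) auto
    then have "C * eps * (1 + r\<^sup>2) powr (eps / 2 - 1)
        * (r * cos (eps * arctan r) - sin (eps * arctan r)) > 0"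
      using assms by simp
    then show "\<exists>D. (phi_axis_Re C eps has_real_derivative D) (at r) \<and> D > 0"
      using phi_axis_Re_has_real_derivative by blast
  qed (rule continuous_on_phi_axis_Re)
qed

lemma phi_axis_Im_nonneg:
  assumes "C \<ge> 0" and "0 \<le> eps" and "eps \<le> 2" and "r \<ge> 0"
  shows "phi_axis_Im C eps r \<ge> 0"
proof -
  have "0 \<le> arctan r" "arctan r < pi / 2"
    using assms(4) arctan_bounded[of r] by (auto simp: arctan_less_zero_iff)
  then have "0 \<le> eps * arctan r" "eps * arctan r \<le> pi"
    using assms(2,3) mult_mono[of eps 2 "arctan r" "pi / 2"] by auto
  then have "sin (eps * arctan r) \<ge> 0"
    by (rule sin_ge_zero)
  then show ?thesis
    using assms by (simp add: phi_axis_Im_def)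
qed

lemma phi_axis_Re_asymp_equiv:
  assumes "C > 0" and "0 < eps" and "eps < 1"
  shows "phi_axis_Re C eps \<sim>[at_top] (\<lambda>r. C * cos (eps * pi / 2) * r powr eps)"
proof -
  have "cos (eps * pi / 2) > 0"
    using assms by (intro cos_times_pi_half_pos) simp
  with assms show ?thesis
    unfolding phi_axis_Re_def by real_asymp
qed

lemma phi_axis_Im_asymp_equiv:
  assumes "0 < eps" and "eps < 1"
  shows "phi_axis_Im C eps \<sim>[at_top] (\<lambda>r. r)"
  using assms unfolding phi_axis_Im_def by real_asymp

lemma phi_axis_Re_image:
  assumes "C > 0" and "0 < eps" and "eps < 1"
  shows "phi_axis_Re C eps ` {0..} = {C..}"
proof
  have "phi_axis_Re C eps 0 = C"
    by (simp add: phi_axis_Re_def)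
  then show "phi_axis_Re C eps ` {0..} \<subseteq> {C..}"
    using strict_mono_on_less_eq[OF phi_axis_Re_strict_mono_on[OF assms], of 0] by auto
  show "{C..} \<subseteq> phi_axis_Re C eps ` {0..}"
  proof
    fix s
    assume "s \<in> {C..}"
    have "cos (eps * pi / 2) > 0"
      using assms by (intro cos_times_pi_half_pos) simp
    with assms have "filterlim (phi_axis_Re C eps) at_top at_top"
      unfolding phi_axis_Re_def by real_asymp
    then obtain R where "R \<ge> 0" "phi_axis_Re C eps R \<ge> s"
      unfolding filterlim_at_top eventually_at_top_linorder by (metis nle_le)
    then obtain r where "0 \<le> r" "r \<le> R" "phi_axis_Re C eps r = s"
      using IVT'[of "phi_axis_Re C eps" 0 s R] \<open>phi_axis_Re C eps 0 = C\<close> \<open>s \<in> {C..}\<close>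
        continuous_on_phi_axis_Re by auto
    then show "s \<in> phi_axis_Re C eps ` {0..}"
      by auto
  qed
qed

lemma phi_axis_Im_graph_of_Re:
  assumes "C > 0" and "0 < eps" and "eps < 1"
  shows "\<exists>f :: real \<Rightarrow> real.
    continuous_on {C..} f \<and> f ` {C..} \<subseteq> {0..} \<and>
    (\<forall>r>0. phi_axis_Im C eps r = f (phi_axis_Re C eps r)) \<and>
    f \<sim>[at_top] (\<lambda>s. (C * cos (eps * pi / 2)) powr (-1 / eps) * s powr (1 / eps))"
proof -
  define u where "u = the_inv_into {0..} (phi_axis_Re C eps)"
  note mono = phi_axis_Re_strict_mono_on[OF assms]
  note image = phi_axis_Re_image[OF assms]
  have inj: "inj_on (phi_axis_Re C eps) {0..}"
    using mono by (rule strict_mono_on_imp_inj_on)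
  have u_cont: "continuous_on {C..} u"
    using continuous_on_the_inv_into_atLeast[OF continuous_on_phi_axis_Re mono]
    by (simp add: u_def image)
  have u_inverse: "u s \<ge> 0 \<and> phi_axis_Re C eps (u s) = s" if "s \<ge> C" for s
    using that image the_inv_into_into[OF inj, of s "{0..}"] f_the_inv_into_f[OF inj, of s]
    by (simp add: u_def)
  have u_top: "filterlim u at_top at_top"
    unfolding u_def using mono image by (rule filterlim_the_inv_into_at_top)
  have "u \<sim>[at_top] (\<lambda>s. (C * cos (eps * pi / 2)) powr (-1 / eps) * s powr (1 / eps))"
  proof (rule asymp_equiv_inverse_powr[OF phi_axis_Re_asymp_equiv[OF assms] _ _ u_top])
    show "C * cos (eps * pi / 2) > 0"
      using assms cos_times_pi_half_pos[of eps] by simp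
    show "eventually (\<lambda>s. phi_axis_Re C eps (u s) = s) at_top"
      using eventually_ge_at_top[of C] by eventually_elim (simp add: u_inverse)
  qed (use assms in simp)
  moreover have "(\<lambda>s. phi_axis_Im C eps (u s)) \<sim>[at_top] u"
    using asymp_equiv_compose'[OF phi_axis_Im_asymp_equiv u_top] assms by simp
  ultimately have asymp: "(\<lambda>s. phi_axis_Im C eps (u s))
      \<sim>[at_top] (\<lambda>s. (C * cos (eps * pi / 2)) powr (-1 / eps) * s powr (1 / eps))"
    by (rule asymp_equiv_trans[rotated])
  have "continuous_on {C..} (\<lambda>s. phi_axis_Im C eps (u s))"
    using continuous_on_compose2[OF continuous_on_phi_axis_Im u_cont] by blast
  moreover have "(\<lambda>s. phi_axis_Im C eps (u s)) ` {C..} \<subseteq> {0..}"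
    using assms u_inverse phi_axis_Im_nonneg by auto
  moreover have "phi_axis_Im C eps r = phi_axis_Im C eps (u (phi_axis_Re C eps r))" if "r > 0" for r
    using that inj by (simp add: u_def the_inv_into_f_f)
  ultimately show ?thesis
    using asymp by blast
qed

theorem lemma3p1:
  fixes C eps :: real
  assumes "C > 0" and "0 < eps" and "eps < 1"
  shows "(phiCe C eps holomorphic_on rhp \<and> inj_on (phiCe C eps) rhp \<and>
          (\<exists>g. g holomorphic_on (phiCe C eps ` rhp) \<and>
               (\<forall>z\<in>rhp. g (phiCe C eps z) = z) \<and>
               (\<forall>w\<in>phiCe C eps ` rhp. phiCe C eps (g w) = w)))
     \<and> ((\<lambda>r. Re (phiCe C eps (\<i> * complex_of_real r)))
           \<sim>[at_top] (\<lambda>r. C * cos (eps * pi / 2) * r powr eps))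
     \<and> ((\<lambda>r. Im (phiCe C eps (\<i> * complex_of_real r))) \<sim>[at_top] (\<lambda>r. r))
     \<and> (\<exists>f :: real \<Rightarrow> real.
          continuous_on {C..} f \<and> f ` {C..} \<subseteq> {0..} \<and>
          (\<forall>r>0. Im (phiCe C eps (\<i> * complex_of_real r))
                 = f (Re (phiCe C eps (\<i> * complex_of_real r)))) \<and>
          f \<sim>[at_top] (\<lambda>r. (C * cos (eps * pi / 2)) powr (-1 / eps) * r powr (1 / eps)))"
  using phiCe_biholomorphic_rhp phi_axis_Re_asymp_equiv phi_axis_Im_asymp_equiv
    phi_axis_Im_graph_of_Re assms
  by (simp add: Re_phiCe_ii_times Im_phiCe_ii_times)

end
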